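(* Let $i\in\mathbb{N}$ and $f\in\mathbb{R}^n\setminus\mathbb{Z}^n$. Then $\mathcal{L}_i^n$ is $f$-closed.
   Context: $\mathcal{C}^n$ is the family of all $n$-dimensional closed convex subsets of $\mathbb{R}^n$; $\mathcal{C}^n_f$ is the subfamily of sets containing $f$ in the interior, and for $\mathcal{B}\subseteq\mathcal{C}^n$, $\mathcal{B}_f=\mathcal{B}\cap\mathcal{C}^n_f$. A set $B$ is lattice-free if $B\in\mathcal{C}^n$ and $\operatorname{int}(B)\cap\mathbb{Z}^n=\emptyset$. $\mathcal{L}_i^n$ is the family of all lattice-free polyhedra in $\mathbb{R}^n$ with at most $i$ facets. For $B\in\mathcal{C}^n$ with $0\in\operatorname{int}(B)$, $\psi_B(r)=\inf\{\lambda>0:r\in\lambda B\}$. A family $\mathcal{B}\subseteq\mathcal{C}^n$ is $f$-closed if whenever $B_t\in\mathcal{B}_f$ ($t\in\mathbb{N}$), $C\in\mathcal{C}^n_f$ and $\psi_{B_t-f}\to\psi_{C-f}$ pointwise on $\mathbb{R}^n$, then $C\in\mathcal{B}_f$. *)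

theory Defs
  imports "HOL-Analysis.Analysis"
begin

definition lattice_pts :: "(real^'n) set" where
  "lattice_pts = {x. \<forall>k. x $ k \<in> \<int>}"

definition convC :: "(real^'n) set set" where
  "convC = {B. closed B \<and> convex B \<and> aff_dim B = int CARD('n)}"

definition convC_at :: "real^'n \<Rightarrow> (real^'n) set set" where
  "convC_at f = {B \<in> convC. f \<in> interior B}"

definition fam_at :: "(real^'n) set set \<Rightarrow> real^'n \<Rightarrow> (real^'n) set set" where
  "fam_at \<B> f = \<B> \<inter> convC_at f"

definition lattice_free :: "(real^'n) set \<Rightarrow> bool" where
  "lattice_free B \<longleftrightarrow> B \<in> convC \<and> interior B \<inter> lattice_pts = {}"

definition lf_polyhedra :: "nat \<Rightarrow> (real^'n) set set" where
  "lf_polyhedra i = {P. polyhedron P \<and> lattice_free P \<and>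
      finite {F. F facet_of P} \<and> card {F. F facet_of P} \<le> i}"

definition gauge_fn :: "(real^'n) set \<Rightarrow> real^'n \<Rightarrow> real" where
  "gauge_fn B r = Inf {l. l > 0 \<and> r \<in> (\<lambda>x. l *\<^sub>R x) ` B}"

definition f_closed :: "real^'n \<Rightarrow> (real^'n) set set \<Rightarrow> bool" where
  "f_closed f \<B> \<longleftrightarrow>
     (\<forall>(Bs :: nat \<Rightarrow> (real^'n) set) C.
        (\<forall>t. Bs t \<in> fam_at \<B> f) \<longrightarrow> C \<in> convC_at f \<longrightarrow>
        (\<forall>r. (\<lambda>t. gauge_fn ((\<lambda>x. x - f) ` Bs t) r) \<longlonglongrightarrow> gauge_fn ((\<lambda>x. x - f) ` C) r) \<longrightarrow>
        C \<in> fam_at \<B> f)"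

end

theory Submission
  imports Defs
begin

text \<open>After translating \<open>f\<close> to the origin, a lattice-free polyhedron with at most \<open>i\<close>
  facets and \<open>f\<close> in its interior is \<open>{y. c\<^sub>j \<bullet> y \<le> 1, j < i}\<close>, whose gauge is
  \<open>max 0 (max\<^sub>j c\<^sub>j \<bullet> r)\<close>. Pointwise convergence of these gauges bounds the normals
  \<open>c\<^sub>j\<close>, so along a subsequence they converge to some \<open>d\<^sub>j\<close>, and the limit gauge is
  \<open>max 0 (max\<^sub>j d\<^sub>j \<bullet> r)\<close>. Since a closed convex set is the sublevel set \<open>\<le> 1\<close> of its
  gauge, \<open>C - f = {y. d\<^sub>j \<bullet> y \<le> 1}\<close> has at most \<open>i\<close> facets. An interior point of
  \<open>C\<close> has limit gauge \<open>< 1\<close>, hence gauge \<open>< 1\<close> for some \<open>B\<^sub>t\<close>, so it is interior to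
  \<open>B\<^sub>t\<close> as well; thus \<open>C\<close> inherits lattice-freeness.\<close>

fun polyhedral_gauge :: "(nat \<Rightarrow> 'a::real_inner) \<Rightarrow> nat \<Rightarrow> 'a \<Rightarrow> real" where
  "polyhedral_gauge c 0 r = 0"
| "polyhedral_gauge c (Suc k) r = max (polyhedral_gauge c k r) (c k \<bullet> r)"

definition unit_polyhedron :: "(nat \<Rightarrow> 'a::real_inner) \<Rightarrow> nat \<Rightarrow> 'a set" where
  "unit_polyhedron c k = {y. \<forall>j<k. c j \<bullet> y \<le> 1}"

lemma polyhedral_gauge_le_iff:
  "polyhedral_gauge c k r \<le> l \<longleftrightarrow> 0 \<le> l \<and> (\<forall>j<k. c j \<bullet> r \<le> l)"
  by (induction k) (auto simp: less_Suc_eq)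

lemma polyhedral_gauge_less_iff:
  "polyhedral_gauge c k r < l \<longleftrightarrow> 0 < l \<and> (\<forall>j<k. c j \<bullet> r < l)"
  by (induction k) (auto simp: less_Suc_eq)

lemma inner_le_polyhedral_gauge: "j < k \<Longrightarrow> c j \<bullet> r \<le> polyhedral_gauge c k r"
  using polyhedral_gauge_le_iff[of c k r "polyhedral_gauge c k r"] by auto

lemma tendsto_polyhedral_gauge:
  assumes "\<And>j. j < k \<Longrightarrow> (\<lambda>t. c t j) \<longlonglongrightarrow> d j"
  shows "(\<lambda>t. polyhedral_gauge (c t) k r) \<longlonglongrightarrow> polyhedral_gauge d k r"
  using assms by (induction k) (auto intro!: tendsto_max tendsto_intros)

lemma continuous_on_polyhedral_gauge: "continuous_on S (polyhedral_gauge c k)"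
  by (induction k) (auto intro!: continuous_intros)

lemma mem_unit_polyhedron_iff: "y \<in> unit_polyhedron c k \<longleftrightarrow> polyhedral_gauge c k y \<le> 1"
  by (simp add: unit_polyhedron_def polyhedral_gauge_le_iff)

lemma interior_unit_polyhedron:
  "interior (unit_polyhedron c k) = {y. polyhedral_gauge c k y < 1}"
proof (intro set_eqI iffI)
  fix y assume "y \<in> interior (unit_polyhedron c k)"
  then obtain e where e: "e > 0" "ball y e \<subseteq> unit_polyhedron c k"
    using mem_interior by blast
  show "y \<in> {y. polyhedral_gauge c k y < 1}"
  proof (cases "y = 0")
    case False
    define s where "s = e / (2 * norm y)"
    have "s > 0" using e False by (simp add: s_def)
    have "dist y ((1 + s) *\<^sub>R y) < e"
      using e False by (simp add: s_def dist_norm algebra_simps)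
    then have "(1 + s) *\<^sub>R y \<in> unit_polyhedron c k" using e by auto
    \<comment> \<open>pushing \<open>y\<close> outwards by the factor \<open>1 + s\<close> stays inside, so \<open>y\<close> satisfies
      every inequality strictly\<close>
    then have "(1 + s) * (c j \<bullet> y) \<le> 1" if "j < k" for j
      using that by (auto simp: unit_polyhedron_def)
    then have "c j \<bullet> y < 1" if "j < k" for j
      using that \<open>s > 0\<close> by (smt (verit) mult_le_cancel_right1 mult.commute)
    then show ?thesis by (simp add: polyhedral_gauge_less_iff)
  qed (simp add: polyhedral_gauge_less_iff)
next
  fix y assume "y \<in> {y. polyhedral_gauge c k y < 1}"
  moreover have "open {y. polyhedral_gauge c k y < 1}"
    by (intro open_Collect_less continuous_on_polyhedral_gauge continuous_intros)
  moreover have "{y. polyhedral_gauge c k y < 1} \<subseteq> unit_polyhedron c k"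
    by (auto simp: mem_unit_polyhedron_iff)
  ultimately show "y \<in> interior (unit_polyhedron c k)"
    by (meson interior_maximal interior_open subsetD)
qed

lemma gauge_fn_eq_Inf:
  "gauge_fn K y = Inf {l. l > 0 \<and> (1 / l) *\<^sub>R y \<in> K}"
proof -
  have "y \<in> (\<lambda>x. l *\<^sub>R x) ` K \<longleftrightarrow> (1 / l) *\<^sub>R y \<in> K" if "l > 0" for l
    using that by (auto simp: image_iff intro: bexI[of _ "(1 / l) *\<^sub>R y"])
  then show ?thesis
    unfolding gauge_fn_def by (metis (lifting))
qed

lemma gauge_fn_unit_polyhedron:
  "gauge_fn (unit_polyhedron c k) r = polyhedral_gauge c k r"
proof -
  let ?g = "polyhedral_gauge c k r"
  have "(1 / l) *\<^sub>R r \<in> unit_polyhedron c k \<longleftrightarrow> ?g \<le> l" if "l > 0" for l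
    using that by (simp add: unit_polyhedron_def polyhedral_gauge_le_iff divide_le_eq mult.commute)
  then have eq: "{l. l > 0 \<and> (1 / l) *\<^sub>R r \<in> unit_polyhedron c k} = {l. 0 < l \<and> ?g \<le> l}"
    by blast
  have "?g \<ge> 0"
    using polyhedral_gauge_le_iff by blast
  then consider "?g = 0" | "?g > 0" by linarith
  then show ?thesis
  proof cases
    case 1
    then have "{l. 0 < l \<and> ?g \<le> l} = {0<..}" by auto
    then show ?thesis unfolding gauge_fn_eq_Inf eq using 1 by simp
  next
    case 2
    then have "{l. 0 < l \<and> ?g \<le> l} = {?g..}" by auto
    then show ?thesis unfolding gauge_fn_eq_Inf eq by simp
  qed
qed

lemma scaleR_mem_convex:
  fixes K :: "'a::real_vector set"
  assumes "convex K" "0 \<in> K" "x \<in> K" "0 \<le> u" "u \<le> 1"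
  shows "u *\<^sub>R x \<in> K"
  using convexD[OF assms(1,3,2), of u "1 - u"] assms(4,5) by simp

lemma gauge_fn_le_1_iff:
  fixes K :: "(real^'n) set"
  assumes "closed K" "convex K" "0 \<in> interior K"
  shows "gauge_fn K y \<le> 1 \<longleftrightarrow> y \<in> K"
proof -
  define S where "S = {l. l > 0 \<and> (1 / l) *\<^sub>R y \<in> K}"
  have K0: "0 \<in> K" using assms(3) interior_subset by blast
  have up: "m \<in> S" if "l \<in> S" "l \<le> m" for l m
  proof -
    have l: "l > 0" "(1 / l) *\<^sub>R y \<in> K" using that(1) by (auto simp: S_def)
    then have "(l / m) *\<^sub>R ((1 / l) *\<^sub>R y) \<in> K"
      using that(2) by (intro scaleR_mem_convex[OF assms(2) K0, of "(1 / l) *\<^sub>R y" "l / m"]) auto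
    moreover have "(l / m) *\<^sub>R ((1 / l) *\<^sub>R y) = (1 / m) *\<^sub>R y" using l(1) by simp
    ultimately show ?thesis using l that(2) by (auto simp: S_def)
  qed
  obtain e where e: "e > 0" "ball 0 e \<subseteq> K" using assms(3) mem_interior by blast
  \<comment> \<open>\<open>K\<close> is absorbing, so \<open>S\<close> is nonempty\<close>
  define m where "m = 2 * norm y / e + 1"
  have m: "m > 0" "norm y < m * e"
    using e(1) by (auto simp: m_def algebra_simps add_pos_nonneg)
  then have "norm ((1 / m) *\<^sub>R y) < e"
    by (simp add: pos_divide_less_eq mult.commute)
  then have "m \<in> S" using e m(1) by (auto simp: S_def)
  then have "S \<noteq> {}" by blast
  have "bdd_below S" by (auto simp: S_def bdd_below_def intro!: exI[of _ 0])
  show ?thesis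
  proof
    assume "gauge_fn K y \<le> 1"
    moreover have "0 < 1 / real (Suc n)" for n by simp
    ultimately have "Inf S < 1 + 1 / real (Suc n)" for n
      unfolding S_def gauge_fn_eq_Inf by (smt (verit))
    then have "(1 / (1 + 1 / real (Suc n))) *\<^sub>R y \<in> K" for n
      using up cInf_lessD[OF \<open>S \<noteq> {}\<close>] by (metis S_def less_eq_real_def mem_Collect_eq)
    moreover have "(\<lambda>n. (1 / (1 + 1 / real (Suc n))) *\<^sub>R y) \<longlonglongrightarrow> (1 / (1 + 0)) *\<^sub>R y"
      by (intro tendsto_intros LIMSEQ_Suc[OF lim_inverse_n']) auto
    ultimately show "y \<in> K"
      using closed_sequentially[OF assms(1)] by fastforce
  next
    assume "y \<in> K"
    then have "1 \<in> S" by (simp add: S_def)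
    then show "gauge_fn K y \<le> 1"
      unfolding gauge_fn_eq_Inf S_def[symmetric] using \<open>bdd_below S\<close> by (rule cInf_lower)
  qed
qed

lemma bounded_normals_of_bounded_polyhedral_gauges:
  fixes c :: "nat \<Rightarrow> nat \<Rightarrow> 'a::euclidean_space"
  assumes bnd: "\<And>r. bounded (range (\<lambda>t. polyhedral_gauge (c t) k r))" and "j < k"
  shows "bounded (range (\<lambda>t. c t j))"
proof -
  have "\<forall>r. \<exists>a. \<forall>t. \<bar>polyhedral_gauge (c t) k r\<bar> \<le> a"
    using bnd by (auto simp: bounded_iff)
  then obtain K where K: "\<And>r t. \<bar>polyhedral_gauge (c t) k r\<bar> \<le> K r"
    by metis
  have bound: "\<bar>c t j \<bullet> b\<bar> \<le> K b + K (- b)" for t b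
  proof -
    have "c t j \<bullet> r \<le> K r" for r
      using inner_le_polyhedral_gauge[OF \<open>j < k\<close>, where c="c t" and r=r] K[where r=r and t=t] by linarith
    from this[of b] this[of "- b"] have "c t j \<bullet> b \<le> K b" "- (c t j \<bullet> b) \<le> K (- b)"
      by simp_all
    moreover have "0 \<le> K b" "0 \<le> K (- b)"
      using K[where r=b and t=t] K[where r="- b" and t=t] by auto
    ultimately show ?thesis by linarith
  qed
  have "norm (c t j) \<le> (\<Sum>b\<in>Basis. K b + K (- b))" for t
  proof -
    have "norm (c t j) \<le> (\<Sum>b\<in>Basis. \<bar>c t j \<bullet> b\<bar>)" by (rule norm_le_l1)
    also have "\<dots> \<le> (\<Sum>b\<in>Basis. K b + K (- b))" by (rule sum_mono) (rule bound)
    finally show ?thesis .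
  qed
  then show ?thesis
    by (auto simp: bounded_iff)
qed

lemma finite_family_convergent_subsequence:
  fixes c :: "nat \<Rightarrow> nat \<Rightarrow> 'a::heine_borel"
  assumes "\<And>j. j < k \<Longrightarrow> bounded (range (\<lambda>t. c t j))"
  shows "\<exists>\<sigma> d. strict_mono \<sigma> \<and> (\<forall>j<k. (\<lambda>t. c (\<sigma> t) j) \<longlonglongrightarrow> d j)"
  using assms
proof (induction k)
  case 0
  show ?case by (rule exI[of _ id]) (simp add: strict_mono_def)
next
  case (Suc k)
  then obtain \<sigma> d where \<sigma>: "strict_mono \<sigma>" and d: "\<forall>j<k. (\<lambda>t. c (\<sigma> t) j) \<longlonglongrightarrow> d j"
    by (metis less_SucI)
  have "bounded (range (\<lambda>t. c (\<sigma> t) k))"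
    using Suc.prems[of k] by (rule bounded_subset) auto
  then obtain l \<rho> where \<rho>: "strict_mono \<rho>" and l: "((\<lambda>t. c (\<sigma> t) k) \<circ> \<rho>) \<longlonglongrightarrow> l"
    using bounded_imp_convergent_subsequence by blast
  have "(\<lambda>t. c ((\<sigma> \<circ> \<rho>) t) j) \<longlonglongrightarrow> (d(k := l)) j" if "j < Suc k" for j
  proof (cases "j = k")
    case True
    then show ?thesis using l by (simp add: o_def)
  next
    case False
    then have "j < k" using that by simp
    then have "((\<lambda>t. c (\<sigma> t) j) \<circ> \<rho>) \<longlonglongrightarrow> d j"
      using d LIMSEQ_subseq_LIMSEQ[OF _ \<rho>] by blast
    then show ?thesis using False by (simp add: o_def)
  qed
  then show ?case
    using strict_mono_o[OF \<sigma> \<rho>] by blast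
qed

lemma limit_of_polyhedral_gauges:
  fixes c :: "nat \<Rightarrow> nat \<Rightarrow> 'a::euclidean_space"
  assumes "\<And>r. (\<lambda>t. polyhedral_gauge (c t) k r) \<longlonglongrightarrow> g r"
  obtains d \<sigma> where "strict_mono \<sigma>" "g = polyhedral_gauge d k"
    "\<And>r. (\<lambda>t. polyhedral_gauge (c (\<sigma> t)) k r) \<longlonglongrightarrow> polyhedral_gauge d k r"
proof -
  have "bounded (range (\<lambda>t. c t j))" if "j < k" for j
    using convergent_imp_bounded[OF assms] that by (rule bounded_normals_of_bounded_polyhedral_gauges)
  then obtain \<sigma> d where \<sigma>: "strict_mono \<sigma>" and d: "\<forall>j<k. (\<lambda>t. c (\<sigma> t) j) \<longlonglongrightarrow> d j"
    using finite_family_convergent_subsequence by blast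
  have lim: "(\<lambda>t. polyhedral_gauge (c (\<sigma> t)) k r) \<longlonglongrightarrow> polyhedral_gauge d k r" for r
    using d by (intro tendsto_polyhedral_gauge) auto
  have "(\<lambda>t. polyhedral_gauge (c (\<sigma> t)) k r) \<longlonglongrightarrow> g r" for r
    using LIMSEQ_subseq_LIMSEQ[OF assms \<sigma>] by (simp add: o_def)
  then have "g = polyhedral_gauge d k"
    using lim LIMSEQ_unique by blast
  then show thesis using that \<sigma> lim by blast
qed

lemma card_facets_le_card_halfspaces:
  fixes H :: "'a::euclidean_space set set"
  assumes "finite H" and SH: "S = \<Inter>H"
    and halfspaces: "\<And>h. h \<in> H \<Longrightarrow> \<exists>a b. a \<noteq> 0 \<and> h = {x. a \<bullet> x \<le> b}"
  shows "finite {F. F facet_of S} \<and> card {F. F facet_of S} \<le> card H"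
proof -
  define P where "P G \<longleftrightarrow> G \<subseteq> H \<and> S = affine hull S \<inter> \<Inter>G" for G
  have "P H" unfolding P_def using SH hull_subset[of S affine] by auto
  then obtain G where "P G" and G_least: "\<And>G'. P G' \<Longrightarrow> card G \<le> card G'"
    using ex_has_least_nat[of P H card] by blast
  then have GH: "G \<subseteq> H" and SG: "S = affine hull S \<inter> \<Inter>G" unfolding P_def by blast+
  have "finite G" using GH \<open>finite H\<close> finite_subset by blast
  have "\<forall>h\<in>G. \<exists>a b. a \<noteq> 0 \<and> h = {x. a \<bullet> x \<le> b}"
    using halfspaces GH by blast
  then obtain a b where ab: "\<And>h. h \<in> G \<Longrightarrow> a h \<noteq> 0 \<and> h = {x. a h \<bullet> x \<le> b h}"
    by metis
  have minimal: "S \<subset> affine hull S \<inter> \<Inter>G'" if "G' \<subset> G" for G'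
  proof -
    have "card G' < card G" using \<open>finite G\<close> that psubset_card_mono by blast
    then have "\<not> P G'" using G_least by (meson not_le)
    moreover have "S \<subseteq> affine hull S \<inter> \<Inter>G'" using SG that by blast
    ultimately show ?thesis using that GH unfolding P_def by blast
  qed
  have sub: "{F. F facet_of S} \<subseteq> (\<lambda>h. S \<inter> {x. a h \<bullet> x = b h}) ` G"
    using facet_of_polyhedron_explicit[OF \<open>finite G\<close> SG ab minimal] by blast
  then have "card {F. F facet_of S} \<le> card ((\<lambda>h. S \<inter> {x. a h \<bullet> x = b h}) ` G)"
    using \<open>finite G\<close> by (intro card_mono) auto
  also have "\<dots> \<le> card G" using \<open>finite G\<close> by (rule card_image_le)
  also have "\<dots> \<le> card H" using GH \<open>finite H\<close> card_mono by blast
  finally show ?thesis using sub \<open>finite G\<close> finite_subset by blast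
qed

lemma hyperplane_crossing_segment:
  fixes a :: "'a::real_inner"
  assumes "a \<bullet> z \<le> b" "b < a \<bullet> x"
  obtains u where "0 \<le> u" "u < 1" "a \<bullet> ((1 - u) *\<^sub>R z + u *\<^sub>R x) = b"
proof
  let ?u = "(b - a \<bullet> z) / (a \<bullet> x - a \<bullet> z)"
  show "0 \<le> ?u" "?u < 1" using assms by (auto simp: divide_simps)
  have "a \<bullet> ((1 - u) *\<^sub>R z + u *\<^sub>R x) = a \<bullet> z + u * (a \<bullet> x - a \<bullet> z)" for u
    by (simp add: inner_add_right algebra_simps)
  then have "a \<bullet> ((1 - ?u) *\<^sub>R z + ?u *\<^sub>R x) = a \<bullet> z + ?u * (a \<bullet> x - a \<bullet> z)" .
  also have "\<dots> = b" using assms by simp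
  finally show "a \<bullet> ((1 - ?u) *\<^sub>R z + ?u *\<^sub>R x) = b" .
qed

lemma inj_on_facets_of_minimal_halfspaces:
  fixes F :: "'a::euclidean_space set set"
  assumes "finite F" and full: "affine hull S = UNIV" and SF: "S = \<Inter>F"
    and ab: "\<And>h. h \<in> F \<Longrightarrow> a h \<noteq> 0 \<and> h = {x. a h \<bullet> x \<le> b h}"
    and minimal: "\<And>F'. F' \<subset> F \<Longrightarrow> S \<subset> \<Inter>F'"
  shows "inj_on (\<lambda>h. S \<inter> {x. a h \<bullet> x = b h}) F"
proof (rule inj_onI, rule ccontr)
  fix h1 h2
  assume h1: "h1 \<in> F" and h2: "h2 \<in> F" and ne: "h1 \<noteq> h2"
    and eq: "S \<inter> {x. a h1 \<bullet> x = b h1} = S \<inter> {x. a h2 \<bullet> x = b h2}"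
  have mem: "x \<in> h \<longleftrightarrow> a h \<bullet> x \<le> b h" if "h \<in> F" for h x
    using ab[OF that] by blast
  \<comment> \<open>the segment from a point of \<open>S\<close> off the facet of \<open>h1\<close> to a point violating only
    \<open>h2\<close> meets the facet of \<open>h2\<close> outside that of \<open>h1\<close>\<close>
  obtain x where x: "x \<in> \<Inter>(F - {h2})" "x \<notin> S"
    using minimal[of "F - {h2}"] h2 by blast
  then have "b h2 < a h2 \<bullet> x" using SF h2 mem by auto
  have "S \<inter> {x. a h1 \<bullet> x = b h1} facet_of S"
    using facet_of_polyhedron_explicit[OF \<open>finite F\<close> _ ab] h1 full SF minimal by auto
  then have "S \<inter> {x. a h1 \<bullet> x = b h1} \<noteq> S"
    by (metis facet_of_irrefl)
  then obtain z where "z \<in> S" "a h1 \<bullet> z \<noteq> b h1"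
    by blast
  then have z1: "a h1 \<bullet> z < b h1" and z2: "a h2 \<bullet> z \<le> b h2"
    using SF h1 h2 mem by fastforce+
  obtain u where u: "0 \<le> u" "u < 1" and y2: "a h2 \<bullet> ((1 - u) *\<^sub>R z + u *\<^sub>R x) = b h2"
    using hyperplane_crossing_segment[OF z2 \<open>b h2 < a h2 \<bullet> x\<close>] by blast
  define y where "y = (1 - u) *\<^sub>R z + u *\<^sub>R x"
  have "y \<in> h" if "h \<in> F" for h
  proof (cases "h = h2")
    case True
    then show ?thesis using mem[OF h2] y2 by (simp add: y_def)
  next
    case False
    then have "x \<in> h" "z \<in> h" using x \<open>z \<in> S\<close> SF that by auto
    moreover have "convex h" using ab[OF that] convex_halfspace_le by metis
    ultimately show ?thesis using u by (simp add: y_def convexD)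
  qed
  then have "y \<in> S \<inter> {x. a h2 \<bullet> x = b h2}" using SF y2 by (auto simp: y_def)
  then have "a h1 \<bullet> y = b h1" using eq by blast
  moreover have "a h1 \<bullet> y < b h1"
  proof -
    have "a h1 \<bullet> x \<le> b h1" using x h1 ne mem by blast
    then have "(1 - u) * (a h1 \<bullet> z) + u * (a h1 \<bullet> x) < (1 - u) * b h1 + u * b h1"
      using u z1 by (intro add_less_le_mono mult_strict_left_mono mult_left_mono) auto
    then show ?thesis by (simp add: y_def inner_add_right algebra_simps)
  qed
  ultimately show False by simp
qed

lemma unit_polyhedron_eq_finite:
  fixes A :: "'a::real_inner set"
  assumes "finite A" "card A \<le> k"
  obtains c where "unit_polyhedron c k = {y. \<forall>v\<in>A. v \<bullet> y \<le> 1}"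
proof -
  obtain g where g: "bij_betw g {0..<card A} A"
    using ex_bij_betw_nat_finite[OF \<open>finite A\<close>] by blast
  \<comment> \<open>the surplus indices get the zero vector, whose inequality \<open>0 \<le> 1\<close> is void\<close>
  define c where "c j = (if j < card A then g j else 0)" for j
  have gA: "g ` {0..<card A} = A" using g by (simp add: bij_betw_def)
  have "unit_polyhedron c k = {y. \<forall>v\<in>A. v \<bullet> y \<le> 1}"
  proof (intro set_eqI iffI)
    fix y assume y: "y \<in> unit_polyhedron c k"
    have "v \<bullet> y \<le> 1" if "v \<in> A" for v
    proof -
      obtain j where "j < card A" "v = g j" using \<open>v \<in> A\<close> gA by (metis atLeastLessThan_iff imageE)
      moreover have "c j \<bullet> y \<le> 1"
        using y \<open>j < card A\<close> assms(2) by (simp add: unit_polyhedron_def)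
      ultimately show ?thesis by (simp add: c_def)
    qed
    then show "y \<in> {y. \<forall>v\<in>A. v \<bullet> y \<le> 1}" by blast
  next
    fix y assume "y \<in> {y. \<forall>v\<in>A. v \<bullet> y \<le> 1}"
    then show "y \<in> unit_polyhedron c k"
      using gA by (auto simp: unit_polyhedron_def c_def)
  qed
  then show thesis by (rule that)
qed

lemma translate_full_polyhedron_eq_unit_polyhedron:
  fixes B :: "'a::euclidean_space set"
  assumes "polyhedron B" and full: "affine hull B = UNIV" and "f \<in> interior B"
    and "finite {F. F facet_of B}" "card {F. F facet_of B} \<le> k"
  obtains c where "(\<lambda>x. x - f) ` B = unit_polyhedron c k"
proof -
  obtain F where "finite F" and seq: "B = affine hull B \<inter> \<Inter>F"
    and "\<And>h. h \<in> F \<Longrightarrow> \<exists>a b. a \<noteq> 0 \<and> h = {x. a \<bullet> x \<le> b}"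
    and minimal: "\<And>F'. F' \<subset> F \<Longrightarrow> B \<subset> affine hull B \<inter> \<Inter>F'"
    using \<open>polyhedron B\<close> by (simp add: polyhedron_Int_affine_minimal) meson
  then obtain a b where ab: "\<And>h. h \<in> F \<Longrightarrow> a h \<noteq> 0 \<and> h = {x. a h \<bullet> x \<le> b h}"
    by metis
  have BF: "B = \<Inter>F" using seq full by simp
  have "inj_on (\<lambda>h. B \<inter> {x. a h \<bullet> x = b h}) F"
    using inj_on_facets_of_minimal_halfspaces[OF \<open>finite F\<close> full BF ab] minimal full by auto
  moreover have "(\<lambda>h. B \<inter> {x. a h \<bullet> x = b h}) ` F \<subseteq> {F. F facet_of B}"
    using facet_of_polyhedron_explicit[OF \<open>finite F\<close> seq ab minimal] by blast
  ultimately have "card F \<le> card {F. F facet_of B}"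
    using assms(4) by (rule card_inj_on_le)
  then have "card F \<le> k" using assms(5) by linarith
  have f_strict: "a h \<bullet> f < b h" if "h \<in> F" for h
  proof -
    have "f \<in> interior h" using \<open>f \<in> interior B\<close> BF that interior_mono by blast
    moreover have "interior h = {x. a h \<bullet> x < b h}"
      using ab[OF that] by (metis interior_halfspace_le)
    ultimately show ?thesis by simp
  qed
  define A where "A = (\<lambda>h. (1 / (b h - a h \<bullet> f)) *\<^sub>R a h) ` F"
  have "card A \<le> k"
    using card_image_le[OF \<open>finite F\<close>] \<open>card F \<le> k\<close> unfolding A_def by (rule le_trans)
  have "y + f \<in> h \<longleftrightarrow> (1 / (b h - a h \<bullet> f)) *\<^sub>R a h \<bullet> y \<le> 1" if "h \<in> F" for h y
  proof -
    have "y + f \<in> h \<longleftrightarrow> a h \<bullet> y \<le> b h - a h \<bullet> f"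
      using ab[OF that] by (metis (no_types, lifting) inner_add_right le_diff_eq mem_Collect_eq)
    also have "\<dots> \<longleftrightarrow> (a h \<bullet> y) / (b h - a h \<bullet> f) \<le> 1"
      using f_strict[OF that] by (simp add: pos_divide_le_eq)
    finally show ?thesis by simp
  qed
  then have "y + f \<in> B \<longleftrightarrow> (\<forall>v\<in>A. v \<bullet> y \<le> 1)" for y
    unfolding BF A_def by blast
  moreover have "y \<in> (\<lambda>x. x - f) ` B \<longleftrightarrow> y + f \<in> B" for y
    by (auto simp: image_iff intro!: bexI[of _ "y + f"])
  ultimately have "(\<lambda>x. x - f) ` B = {y. \<forall>v\<in>A. v \<bullet> y \<le> 1}"
    by blast
  then show thesis
    using unit_polyhedron_eq_finite[of A k] \<open>card A \<le> k\<close> \<open>finite F\<close> that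
    unfolding A_def by (metis finite_imageI)
qed

lemma facets_of_translated_unit_polyhedron:
  fixes C :: "'a::euclidean_space set"
  assumes C: "(\<lambda>x. x - f) ` C = unit_polyhedron d k"
  shows "polyhedron C \<and> finite {F. F facet_of C} \<and> card {F. F facet_of C} \<le> k"
proof -
  define H where "H = (\<lambda>j. {x. d j \<bullet> x \<le> 1 + d j \<bullet> f}) ` {j. j < k \<and> d j \<noteq> 0}"
  have "finite H" by (simp add: H_def)
  have "card H \<le> k"
  proof -
    have "card H \<le> card {j. j < k \<and> d j \<noteq> 0}" unfolding H_def by (rule card_image_le) simp
    also have "\<dots> \<le> card {..<k}" by (rule card_mono) auto
    finally show ?thesis by simp
  qed
  have halfspaces: "\<And>h. h \<in> H \<Longrightarrow> \<exists>a b. a \<noteq> 0 \<and> h = {x. a \<bullet> x \<le> b}"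
    by (auto simp: H_def)
  have "x \<in> C \<longleftrightarrow> x - f \<in> unit_polyhedron d k" for x
    using C[symmetric] by (auto simp: image_iff intro!: bexI[of _ x])
  then have "C = \<Inter>H"
    by (force simp: H_def unit_polyhedron_def inner_diff_right)
  then have "polyhedron C"
    unfolding polyhedron_def using \<open>finite H\<close> halfspaces by blast
  then show ?thesis
    using card_facets_le_card_halfspaces[OF \<open>finite H\<close> \<open>C = \<Inter>H\<close> halfspaces] \<open>card H \<le> k\<close>
    by linarith
qed

lemma interior_subset_UN_interior_of_gauge_limit:
  fixes C :: "'a::real_inner set"
  assumes B: "\<And>t. (\<lambda>x. x - f) ` B t = unit_polyhedron (c t) k"
    and C: "(\<lambda>x. x - f) ` C = unit_polyhedron d k"
    and lim: "\<And>r. (\<lambda>t. polyhedral_gauge (c t) k r) \<longlonglongrightarrow> polyhedral_gauge d k r"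
  shows "interior C \<subseteq> (\<Union>t. interior (B t))"
proof
  fix z assume "z \<in> interior C"
  then have "polyhedral_gauge d k (z - f) < 1"
    using C by (metis image_eqI interior_translation_subtract interior_unit_polyhedron mem_Collect_eq)
  then have "\<forall>\<^sub>F t in sequentially. polyhedral_gauge (c t) k (z - f) < 1"
    by (rule order_tendstoD(2)[OF lim])
  then obtain t where "polyhedral_gauge (c t) k (z - f) < 1"
    unfolding eventually_sequentially by blast
  then have "z - f \<in> (\<lambda>x. x - f) ` interior (B t)"
    by (simp flip: interior_translation_subtract add: B interior_unit_polyhedron)
  then show "z \<in> (\<Union>t. interior (B t))" by auto
qed

lemma translate_eq_unit_polyhedron_of_gauge:
  fixes C :: "(real^'n) set"
  assumes "closed C" "convex C" "f \<in> interior C"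
    and gauge: "gauge_fn ((\<lambda>x. x - f) ` C) = polyhedral_gauge d k"
  shows "(\<lambda>x. x - f) ` C = unit_polyhedron d k"
proof -
  let ?K = "(\<lambda>x. x - f) ` C"
  have "closed ?K" "convex ?K"
    using assms(1,2) closed_translation_subtract convex_translation_subtract by blast+
  moreover have "0 \<in> interior ?K"
    using assms(3) by (simp add: interior_translation_subtract)
  ultimately have "y \<in> ?K \<longleftrightarrow> polyhedral_gauge d k y \<le> 1" for y
    using gauge_fn_le_1_iff gauge by metis
  then show ?thesis
    by (simp add: set_eq_iff mem_unit_polyhedron_iff)
qed

lemma lf_polyhedron_translate_eq_unit_polyhedron:
  fixes B :: "(real^'n) set"
  assumes "B \<in> fam_at (lf_polyhedra i) f"
  obtains c where "(\<lambda>x. x - f) ` B = unit_polyhedron c i"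
proof (rule translate_full_polyhedron_eq_unit_polyhedron)
  show "polyhedron B" "finite {F. F facet_of B}" "card {F. F facet_of B} \<le> i"
    using assms by (auto simp: fam_at_def lf_polyhedra_def)
  show "f \<in> interior B"
    using assms by (simp add: fam_at_def convC_at_def)
  have "aff_dim B = int DIM(real^'n)"
    using assms by (simp add: fam_at_def convC_at_def convC_def)
  then show "affine hull B = UNIV"
    using aff_dim_eq_full by blast
qed

theorem proposition3p7:
  fixes f :: "real^'n" and i :: nat
  assumes "f \<notin> lattice_pts"
  shows "f_closed f (lf_polyhedra i :: (real^'n) set set)"
  unfolding f_closed_def
proof (intro allI impI)
  fix Bs :: "nat \<Rightarrow> (real^'n) set" and C :: "(real^'n) set"
  assume Bs: "\<forall>t. Bs t \<in> fam_at (lf_polyhedra i) f" and C: "C \<in> convC_at f"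
    and lim: "\<forall>r. (\<lambda>t. gauge_fn ((\<lambda>x. x - f) ` Bs t) r) \<longlonglongrightarrow> gauge_fn ((\<lambda>x. x - f) ` C) r"
  have "\<forall>t. \<exists>c. (\<lambda>x. x - f) ` Bs t = unit_polyhedron c i"
    using lf_polyhedron_translate_eq_unit_polyhedron Bs by metis
  then obtain c where c: "\<And>t. (\<lambda>x. x - f) ` Bs t = unit_polyhedron (c t) i"
    by metis
  then have "(\<lambda>t. polyhedral_gauge (c t) i r) \<longlonglongrightarrow> gauge_fn ((\<lambda>x. x - f) ` C) r" for r
    using lim by (simp add: gauge_fn_unit_polyhedron)
  then obtain d \<sigma> where "strict_mono \<sigma>"
    and gauge_C: "gauge_fn ((\<lambda>x. x - f) ` C) = polyhedral_gauge d i"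
    and lim_d: "\<And>r. (\<lambda>t. polyhedral_gauge (c (\<sigma> t)) i r) \<longlonglongrightarrow> polyhedral_gauge d i r"
    using limit_of_polyhedral_gauges by blast
  have "C \<in> convC" "f \<in> interior C" using C by (auto simp: convC_at_def)
  then have C_eq: "(\<lambda>x. x - f) ` C = unit_polyhedron d i"
    by (intro translate_eq_unit_polyhedron_of_gauge gauge_C) (auto simp: convC_def)
  have "interior C \<subseteq> (\<Union>t. interior (Bs (\<sigma> t)))"
    using c C_eq lim_d by (rule interior_subset_UN_interior_of_gauge_limit)
  then have "interior C \<inter> lattice_pts = {}"
    using Bs by (fastforce simp: fam_at_def lf_polyhedra_def lattice_free_def)
  then show "C \<in> fam_at (lf_polyhedra i) f"
    using C facets_of_translated_unit_polyhedron[OF C_eq] \<open>C \<in> convC\<close>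
    by (simp add: fam_at_def lf_polyhedra_def lattice_free_def)
qed

end
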